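(* For an integer $d\geqslant 0$ and a real $x>0$, let $K_d(x)$ be the largest integer $k$ such that $(k-d)k\leqslant dx$; equivalently $K_d(x)=\lfloor (d+\sqrt{d^2+4dx})/2\rfloor$. Then for integers $d$ and reals $x$ with $0\leqslant d\leqslant x$ and $x\geqslant 1$, $$\sum_{K_{d}(x)<k\leqslant K_{d+1}(x)}k^2=\frac{(d+1)\sqrt{d+1}-d\sqrt{d}}{3}\,x^{3/2}+O\bigl((d+1)x\bigr),$$ the sum being over integers $k$, with an absolute implied constant.
   Context: $\lfloor t\rfloor$ denotes the integer part of the real number $t$. *)

theory Defs
  imports Complex_Main
begin

definition K :: "nat \<Rightarrow> real \<Rightarrow> int" where
  "K d x = (GREATEST k::int. (real_of_int k - real d) * real_of_int k \<le> real d * x)"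

end

theory Submission
  imports Defs
begin

text \<open>
  \<open>K\<^sub>d(x)\<close> is the integer part of \<open>r(d) = K_root d x\<close>, the larger root of \<open>k\<^sup>2 - d k - d x\<close>, so the
  sum telescopes into \<open>P(\<lfloor>r(d+1)\<rfloor>) - P(\<lfloor>r(d)\<rfloor>)\<close> for the square pyramidal numbers
  \<open>P(n) = n\<^sup>3/3 + O(n\<^sup>2)\<close>. Since \<open>r(t)\<^sup>2 \<le> 4 t x\<close>, replacing \<open>P(\<lfloor>r\<rfloor>)\<close> by \<open>r\<^sup>3/3\<close> costs \<open>O((d+1) x)\<close>.
  The main term comes from the mean value theorem applied to \<open>G(t) = r(t)\<^sup>3 - (t x)^(3/2)\<close> on
  \<open>[d, d+1]\<close>: in the variables \<open>u = \<surd>t\<close>, \<open>v = \<surd>x\<close>, \<open>w = \<surd>(t + 4x)\<close> one has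
  \<open>G' = u (3 (u+w)\<^sup>4 - 24 w v\<^sup>3) / (16 w)\<close>, and \<open>w - 2v = u\<^sup>2/(w + 2v)\<close> shows that this is
  \<open>O(t x)\<close> as long as \<open>t \<le> 4x\<close>.
\<close>

definition K_root :: "real \<Rightarrow> real \<Rightarrow> real" where
  "K_root t x = (t + sqrt (t\<^sup>2 + 4 * t * x)) / 2"

lemma K_root_squared:
  assumes "0 \<le> t" "0 \<le> x"
  shows "(K_root t x)\<^sup>2 = t * K_root t x + t * x"
proof -
  have "(sqrt (t\<^sup>2 + 4 * t * x))\<^sup>2 = t\<^sup>2 + 4 * t * x"
    using assms by simp
  then show ?thesis
    by (simp add: K_root_def power2_eq_square algebra_simps)
qed

lemma K_root_ge:
  assumes "0 \<le> t" "0 \<le> x"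
  shows "t \<le> K_root t x"
proof -
  have "t \<le> sqrt (t\<^sup>2 + 4 * t * x)"
    using assms by (intro real_le_rsqrt) simp
  then show ?thesis by (simp add: K_root_def)
qed

lemma K_root_mono:
  assumes "0 \<le> s" "s \<le> t" "0 \<le> x"
  shows "K_root s x \<le> K_root t x"
proof -
  have "s\<^sup>2 + 4 * s * x \<le> t\<^sup>2 + 4 * t * x"
    using assms by (intro add_mono power_mono mult_right_mono) auto
  then have "sqrt (s\<^sup>2 + 4 * s * x) \<le> sqrt (t\<^sup>2 + 4 * t * x)"
    by (rule real_sqrt_le_mono)
  with assms(2) show ?thesis
    unfolding K_root_def by (intro divide_right_mono add_mono) simp_all
qed

lemma K_root_eq_sqrt_mult:
  assumes "0 \<le> t" "0 \<le> x"
  shows "K_root t x = sqrt t * (sqrt t + sqrt (t + 4 * x)) / 2"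
proof -
  have "sqrt (t\<^sup>2 + 4 * t * x) = sqrt t * sqrt (t + 4 * x)"
    by (simp add: real_sqrt_mult[symmetric] power2_eq_square algebra_simps)
  then show ?thesis
    using assms by (simp add: K_root_def algebra_simps)
qed

lemma le_K_root_iff:
  assumes "0 \<le> t" "0 \<le> x" "0 \<le> k"
  shows "(k - t) * k \<le> t * x \<longleftrightarrow> k \<le> K_root t x"
proof -
  define r where "r = K_root t x"
  have factor: "(k - t) * k - t * x = (k - r) * (k + r - t)"
    using K_root_squared[OF assms(1,2)] by (simp add: r_def power2_eq_square algebra_simps)
  have "t \<le> r" using assms(1,2) unfolding r_def by (rule K_root_ge)
  show ?thesis
  proof (cases "k \<le> r")
    case True
    then have "(k - r) * (k + r - t) \<le> 0"
      using \<open>t \<le> r\<close> assms(3) by (intro mult_nonpos_nonneg) auto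
    then show ?thesis using factor True by (simp add: r_def)
  next
    case False
    then have "0 < (k - r) * (k + r - t)"
      using \<open>t \<le> r\<close> assms(1,3) by (intro mult_pos_pos) auto
    then show ?thesis using factor False by (simp add: r_def)
  qed
qed

lemma K_eq_floor_K_root:
  assumes "0 \<le> x"
  shows "K d x = \<lfloor>K_root (real d) x\<rfloor>"
  unfolding K_def
proof (rule Greatest_equality)
  have r: "0 \<le> K_root (real d) x"
    using K_root_ge[of "real d" x] assms by simp
  then show "(of_int \<lfloor>K_root (real d) x\<rfloor> - real d) * of_int \<lfloor>K_root (real d) x\<rfloor> \<le> real d * x"
    using assms by (subst le_K_root_iff) auto
  fix k :: int
  assume k: "(of_int k - real d) * of_int k \<le> real d * x"
  show "k \<le> \<lfloor>K_root (real d) x\<rfloor>"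
  proof (cases "k < 0")
    case False
    then have "of_int k \<le> K_root (real d) x"
      using k assms le_K_root_iff[of "real d" x "of_int k"] by simp
    then show ?thesis by (simp add: le_floor_iff)
  qed (use r in linarith)
qed

definition square_pyramidal :: "int \<Rightarrow> real" where
  "square_pyramidal n = of_int n * (of_int n + 1) * (2 * of_int n + 1) / 6"

lemma sum_squares_greaterThanAtMost:
  assumes "a \<le> b"
  shows "(\<Sum>k\<in>{a<..b}. (real_of_int k)\<^sup>2) = square_pyramidal b - square_pyramidal a"
  using assms
proof (induction b rule: int_ge_induct)
  case (step i)
  have "{a<..i + 1} = insert (i + 1) {a<..i}"
    using step by auto
  then show ?case
    using step by (simp add: square_pyramidal_def power2_eq_square algebra_simps)
qed simp

lemma square_pyramidal_floor:
  assumes "0 \<le> R"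
  shows "\<bar>square_pyramidal \<lfloor>R\<rfloor> - R ^ 3 / 3\<bar> \<le> 2 * R\<^sup>2 + R"
proof -
  define n where "n = real_of_int \<lfloor>R\<rfloor>"
  have n: "0 \<le> n" "n \<le> R" "R < n + 1"
    using assms unfolding n_def by auto
  have P: "square_pyramidal \<lfloor>R\<rfloor> = n ^ 3 / 3 + n\<^sup>2 / 2 + n / 6"
    unfolding square_pyramidal_def n_def[symmetric]
    by (simp add: algebra_simps power2_eq_square power3_eq_cube)
  have "R ^ 3 - n ^ 3 = (R - n) * (R\<^sup>2 + R * n + n\<^sup>2)"
    by (simp add: algebra_simps power2_eq_square power3_eq_cube)
  also have "\<dots> \<le> 1 * (R\<^sup>2 + R * R + R\<^sup>2)"
    using n by (intro mult_mono add_mono mult_left_mono power_mono) auto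
  finally have "R ^ 3 - n ^ 3 \<le> 3 * R\<^sup>2"
    by (simp add: power2_eq_square)
  moreover have "n ^ 3 \<le> R ^ 3" "n\<^sup>2 \<le> R\<^sup>2"
    using n by (auto intro: power_mono)
  ultimately show ?thesis
    unfolding P abs_le_iff using n zero_le_power2[of n] by linarith
qed

lemma K_root_squared_le:
  assumes "0 \<le> t" "t \<le> 2 * x"
  shows "(K_root t x)\<^sup>2 \<le> 4 * t * x"
proof -
  define r where "r = K_root t x"
  have "r\<^sup>2 = t * r + t * x"
    unfolding r_def using assms by (intro K_root_squared) auto
  moreover have "2 * (t * r) \<le> r\<^sup>2 + t\<^sup>2"
    using zero_le_power2[of "r - t"] by (simp add: power2_diff algebra_simps)
  moreover have "t\<^sup>2 \<le> 2 * (t * x)"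
    using mult_left_mono[OF assms(2) assms(1)] by (simp add: power2_eq_square)
  ultimately show ?thesis unfolding r_def by linarith
qed

lemma square_pyramidal_floor_K_root:
  assumes x: "1 \<le> x" and t: "0 \<le> t" "t \<le> 2 * x" and c: "t \<le> c" "1 \<le> c"
  shows "\<bar>square_pyramidal \<lfloor>K_root t x\<rfloor> - K_root t x ^ 3 / 3\<bar> \<le> 13 * c * x"
proof -
  define r where "r = K_root t x"
  have "0 \<le> r"
    using K_root_ge[of t x] t x by (simp add: r_def)
  then have "\<bar>square_pyramidal \<lfloor>r\<rfloor> - r ^ 3 / 3\<bar> \<le> 2 * r\<^sup>2 + r"
    by (rule square_pyramidal_floor)
  moreover have "r\<^sup>2 \<le> 4 * t * x"
    unfolding r_def using t by (rule K_root_squared_le)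
  moreover have "2 * r \<le> r\<^sup>2 + 1"
    using zero_le_power2[of "r - 1"] by (simp add: power2_diff)
  moreover have "4 * t * x \<le> 4 * c * x"
    using c x by (simp add: mult_right_mono)
  moreover have "1 \<le> c * x"
    using c x by (metis mult_mono mult_1 zero_le_one order_trans)
  ultimately show ?thesis
    unfolding r_def by linarith
qed

lemma DERIV_K_root_cube_excess:
  assumes t: "0 < t" and x: "0 < x"
  shows "((\<lambda>t. K_root t x ^ 3 - t * sqrt t * (x * sqrt x)) has_real_derivative
     sqrt t * (3 * (sqrt t + sqrt (t + 4 * x)) ^ 4 - 24 * sqrt (t + 4 * x) * sqrt x ^ 3)
       / (16 * sqrt (t + 4 * x))) (at t)"
proof -
  define u w v where "u = sqrt t" and "w = sqrt (t + 4 * x)" and "v = sqrt x"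
  have "0 < t * t + t * (x * 4)"
    using t x by (intro add_pos_pos mult_pos_pos) auto
  then have "((\<lambda>t. K_root t x ^ 3 - t * sqrt t * (x * sqrt x)) has_real_derivative
     3 * K_root t x ^ 2 * ((1 + (2 * t + 4 * x) / (2 * sqrt (t\<^sup>2 + 4 * t * x))) / 2)
       - (sqrt t + t / (2 * sqrt t)) * (x * sqrt x)) (at t)"
    using t x unfolding K_root_def
    by (auto intro!: derivative_eq_intros simp: power2_eq_square field_simps)
  moreover have "3 * K_root t x ^ 2 * ((1 + (2 * t + 4 * x) / (2 * sqrt (t\<^sup>2 + 4 * t * x))) / 2)
       - (sqrt t + t / (2 * sqrt t)) * (x * sqrt x) = u * (3 * (u + w) ^ 4 - 24 * w * v ^ 3) / (16 * w)"
  proof -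
    have u: "0 < u" "t = u\<^sup>2" and w: "0 < w" "w\<^sup>2 = u\<^sup>2 + 4 * v\<^sup>2" and v: "x = v\<^sup>2"
      using t x by (auto simp: u_def w_def v_def)
    have r: "sqrt (t\<^sup>2 + 4 * t * x) = u * w"
      unfolding u_def w_def by (simp add: real_sqrt_mult[symmetric] power2_eq_square algebra_simps)
    have k: "K_root t x = u * (u + w) / 2"
      using K_root_eq_sqrt_mult[of t x] t x by (simp add: u_def w_def)
    show ?thesis
      unfolding r k u_def[symmetric] v_def[symmetric] unfolding u(2) v
      using u(1) w by (simp add: field_simps power2_eq_square power3_eq_cube power4_eq_xxxx) algebra
  qed
  ultimately show ?thesis by (simp add: u_def w_def v_def)
qed

lemma quartic_excess_bounds:
  fixes a e v :: real
  assumes e: "0 \<le> e" "e \<le> a" and a: "a \<le> 3 * v"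
  shows "0 \<le> 3 * (2 * v + a) ^ 4 - 24 * (2 * v + e) * v ^ 3"
    and "3 * (2 * v + a) ^ 4 - 24 * (2 * v + e) * v ^ 3 \<le> 609 * a * v ^ 3"
proof -
  have a0: "0 \<le> a" and v0: "0 \<le> v" using e a by linarith+
  have expand: "3 * (2 * v + a) ^ 4 - 24 * (2 * v + e) * v ^ 3
      = 72 * a * v ^ 3 + 24 * (a - e) * v ^ 3 + 72 * a\<^sup>2 * v\<^sup>2 + 24 * a ^ 3 * v + 3 * a ^ 4"
    by algebra
  show "0 \<le> 3 * (2 * v + a) ^ 4 - 24 * (2 * v + e) * v ^ 3"
    unfolding expand using a0 v0 e by simp
  have "a\<^sup>2 * v\<^sup>2 \<le> 3 * a * v ^ 3"
    using mult_left_mono[OF a, of "a * v\<^sup>2"] a0 v0 by (simp add: power2_eq_square power3_eq_cube algebra_simps)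
  moreover have "a ^ 3 * v \<le> 9 * a * v ^ 3"
    using mult_left_mono[OF power_mono[OF a a0, of 2], of "a * v"] a0 v0
    by (simp add: power2_eq_square power3_eq_cube algebra_simps)
  moreover have "a ^ 4 \<le> 27 * a * v ^ 3"
    using mult_left_mono[OF power_mono[OF a a0, of 3], of a] a0
    by (simp add: power3_eq_cube power4_eq_xxxx algebra_simps)
  moreover have "(a - e) * v ^ 3 \<le> a * v ^ 3"
    using e v0 by (simp add: mult_right_mono)
  ultimately show "3 * (2 * v + a) ^ 4 - 24 * (2 * v + e) * v ^ 3 \<le> 609 * a * v ^ 3"
    unfolding expand by linarith
qed

lemma cube_excess_deriv_bounds:
  fixes u v w :: real
  assumes u: "0 < u" "u \<le> 2 * v" and w: "0 < w" "w\<^sup>2 = u\<^sup>2 + 4 * v\<^sup>2"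
  shows "0 \<le> u * (3 * (u + w) ^ 4 - 24 * w * v ^ 3) / (16 * w)"
    and "u * (3 * (u + w) ^ 4 - 24 * w * v ^ 3) / (16 * w) \<le> 29 * u\<^sup>2 * v\<^sup>2"
proof -
  define e where "e = w - 2 * v"
  have v: "0 < v" using u by linarith
  have "(2 * v)\<^sup>2 \<le> w\<^sup>2" using w(2) by (simp add: power_mult_distrib)
  then have vw: "2 * v \<le> w" using w(1) by (auto intro: power2_le_imp_le)
  then have e0: "0 \<le> e" by (simp add: e_def)
  have "e * (4 * v) \<le> e * (w + 2 * v)"
    using e0 vw by (intro mult_left_mono) auto
  also have "\<dots> = u\<^sup>2"
    using w(2) by (simp add: e_def algebra_simps power2_eq_square)
  also have "\<dots> \<le> (u / 2) * (4 * v)"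
    using mult_left_mono[OF u(2), of u] u(1) by (simp add: power2_eq_square)
  finally have eu: "e \<le> u / 2" using v by simp
  have uw: "2 * v + (u + e) = u + w" and we: "2 * v + e = w" by (simp_all add: e_def)
  have "e \<le> u + e" and "u + e \<le> 3 * v" using u eu by linarith+
  note ex = quartic_excess_bounds[OF e0 this, unfolded uw we]
  then show "0 \<le> u * (3 * (u + w) ^ 4 - 24 * w * v ^ 3) / (16 * w)"
    using u w by simp
  have "u * (3 * (u + w) ^ 4 - 24 * w * v ^ 3) \<le> u * (609 * (3 / 2 * u) * v ^ 3)"
    using ex(2) eu u v by (intro mult_left_mono order.trans[OF ex(2)] mult_right_mono) auto
  then have "u * (3 * (u + w) ^ 4 - 24 * w * v ^ 3) / (16 * w) \<le> u * (609 * (3 / 2 * u) * v ^ 3) / (16 * (2 * v))"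
    using u v vw ex(1) by (intro frac_le) auto
  also have "\<dots> \<le> 29 * u\<^sup>2 * v\<^sup>2"
    using u v by (simp add: power2_eq_square power3_eq_cube)
  finally show "u * (3 * (u + w) ^ 4 - 24 * w * v ^ 3) / (16 * w) \<le> 29 * u\<^sup>2 * v\<^sup>2" .
qed

lemma K_root_cube_increment:
  assumes t: "0 \<le> t" and tx: "t + 1 \<le> 4 * x"
  shows "\<bar>K_root (t + 1) x ^ 3 - K_root t x ^ 3 - ((t + 1) * sqrt (t + 1) - t * sqrt t) * (x * sqrt x)\<bar>
    \<le> 29 * (t + 1) * x"
proof -
  have x: "0 < x" using t tx by linarith
  define G where "G s = K_root s x ^ 3 - s * sqrt s * (x * sqrt x)" for s
  define G' where "G' s = sqrt s * (3 * (sqrt s + sqrt (s + 4 * x)) ^ 4 - 24 * sqrt (s + 4 * x) * sqrt x ^ 3)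
    / (16 * sqrt (s + 4 * x))" for s
  have der: "(G has_real_derivative G' s) (at s)" if "0 < s" for s
    unfolding G_def G'_def using that x by (rule DERIV_K_root_cube_excess)
  have "continuous_on {t..t + 1} G"
    unfolding G_def K_root_def by (intro continuous_intros) auto
  moreover have "G differentiable (at s)" if "t < s" for s
    using der[of s] that t by (auto simp: real_differentiable_def)
  ultimately obtain l z where z: "t < z" "z < t + 1" and l: "(G has_real_derivative l) (at z)"
    and increment: "G (t + 1) - G t = (t + 1 - t) * l"
    using MVT[of t "t + 1" G] by (metis less_add_one)
  have "l = G' z" using z t by (intro DERIV_unique[OF l der]) auto
  have "sqrt z \<le> sqrt (4 * x)"
    using z tx by simp
  then have u: "0 < sqrt z" "sqrt z \<le> 2 * sqrt x"
    using z t by (simp_all add: real_sqrt_mult)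
  have w: "0 < sqrt (z + 4 * x)" "(sqrt (z + 4 * x))\<^sup>2 = (sqrt z)\<^sup>2 + 4 * (sqrt x)\<^sup>2"
    using z t x by auto
  have "0 \<le> l" "l \<le> 29 * z * x"
    using cube_excess_deriv_bounds[OF u w] z t x unfolding \<open>l = G' z\<close> G'_def by auto
  moreover have "29 * z * x \<le> 29 * (t + 1) * x"
    using z x by simp
  moreover have "G (t + 1) - G t = K_root (t + 1) x ^ 3 - K_root t x ^ 3
      - ((t + 1) * sqrt (t + 1) - t * sqrt t) * (x * sqrt x)"
    unfolding G_def by (simp add: algebra_simps)
  ultimately show ?thesis using increment by simp
qed

theorem proposition3:
  shows "\<exists>C::real. \<forall>(d::nat) (x::real). 1 \<le> x \<and> real d \<le> x \<longrightarrow>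
    \<bar>(\<Sum>k\<in>{K d x<..K (d+1) x}. (real_of_int k)^2)
      - ((real d + 1) * sqrt (real d + 1) - real d * sqrt (real d)) / 3 * x powr (3/2)\<bar>
    \<le> C * (real d + 1) * x"
proof (intro exI[of _ 36] allI impI, elim conjE)
  fix d :: nat and x :: real
  assume x: "1 \<le> x" and d: "real d \<le> x"
  define r0 r1 E where "r0 = K_root (real d) x" and "r1 = K_root (real d + 1) x"
    and "E = (real d + 1) * x"
  have "K d x = \<lfloor>r0\<rfloor>" "K (d + 1) x = \<lfloor>r1\<rfloor>"
    unfolding r0_def r1_def using K_eq_floor_K_root[of x d] K_eq_floor_K_root[of x "d + 1"] x
    by (simp_all add: add.commute)
  moreover have "\<lfloor>r0\<rfloor> \<le> \<lfloor>r1\<rfloor>"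
    unfolding r0_def r1_def using x by (intro floor_mono K_root_mono) auto
  ultimately have sum: "(\<Sum>k\<in>{K d x<..K (d + 1) x}. (real_of_int k)\<^sup>2)
      = square_pyramidal \<lfloor>r1\<rfloor> - square_pyramidal \<lfloor>r0\<rfloor>"
    by (simp add: sum_squares_greaterThanAtMost)
  have "x powr (3 / 2) = x powr (1 + 1 / 2)"
    by simp
  also have "\<dots> = x * sqrt x"
    using x by (simp only: powr_add powr_half_sqrt) simp
  finally have powr: "x powr (3 / 2) = x * sqrt x" .
  have "\<bar>square_pyramidal \<lfloor>r0\<rfloor> - r0 ^ 3 / 3\<bar> \<le> 13 * E"
    "\<bar>square_pyramidal \<lfloor>r1\<rfloor> - r1 ^ 3 / 3\<bar> \<le> 13 * E"
    unfolding r0_def r1_def E_def mult.assoc[symmetric] using x d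
    by (intro square_pyramidal_floor_K_root; simp)+
  moreover have "\<bar>r1 ^ 3 - r0 ^ 3 - ((real d + 1) * sqrt (real d + 1) - real d * sqrt (real d)) * (x * sqrt x)\<bar>
      \<le> 29 * E"
    unfolding r0_def r1_def E_def mult.assoc[of 29, symmetric] using x d
    by (intro K_root_cube_increment) auto
  ultimately show "\<bar>(\<Sum>k\<in>{K d x<..K (d+1) x}. (real_of_int k)^2)
      - ((real d + 1) * sqrt (real d + 1) - real d * sqrt (real d)) / 3 * x powr (3/2)\<bar>
    \<le> 36 * (real d + 1) * x"
    unfolding sum powr mult.assoc[of 36] E_def[symmetric] abs_le_iff by auto
qed

end
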